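(* Let $U:\mathbb R^d\times\mathcal P_2\to\mathbb R$ be such that $\partial_xU\in\mathcal C^1(\mathbb R^d\times\mathcal P_2)$, and assume $U$ is displacement monotone in the sense that for all $\xi,\eta\in\mathbb L^2$, $$(d_xd)_\xi U(\eta,\eta):=\tilde{\mathbb E}\Big[\big\langle\partial_{x\mu}U(\xi,\mathcal L_\xi,\tilde\xi)\tilde\eta,\eta\big\rangle+\big\langle\partial_{xx}U(\xi,\mathcal L_\xi)\eta,\eta\big\rangle\Big]\ge 0 .$$ Then $\partial_{xx}U(x,\mu)$ is nonnegative definite for every $(x,\mu)\in\mathbb R^d\times\mathcal P_2$.
   Context: $\mathcal P_2$ is the set of Borel probability measures on $\mathbb R^d$ with finite second moment, with the distance $W_2$. $\mathbb L^2$ denotes the set of square-integrable $\mathbb R^d$-valued random variables on a fixed atomless probability space; $\mathcal L_\xi$ is the law of $\xi$. Given $(\xi,\eta)$, $(\tilde\xi,\tilde\eta)$ denotes an independent copy of $(\xi,\eta)$ (on a product extension of the space) and $\tilde{\mathbb E}$ is the expectation under the joint law. The Wasserstein derivative $\partial_\mu$ of a function of $\mu\in\mathcal P_2$ is characterized by $U(\mathcal L_{\xi+\eta})-U(\mathcal L_\xi)=\mathbb E[\langle\partial_\mu U(\mathcal L_\xi,\xi),\eta\rangle]+o(\|\eta\|_{L^2})$ (with $\partial_\mu U(\mu,\cdot)$ in the $L^2_\mu$-closure of gradients of $C_c^\infty$ functions). $\mathcal C^1(\mathbb R^d\times\mathcal P_2)$ denotes continuous functions $F(x,\mu)$ (here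 possibly vector valued) such that $\partial_xF$ and $\partial_\mu F(x,\mu,\tilde x)$ exist and have jointly continuous extensions to $\mathbb R^d\times\mathcal P_2$, resp. $\mathbb R^d\times\mathcal P_2\times\mathbb R^d$. Notation: $\partial_{x\mu}U(x,\mu,\tilde x):=\partial_x[(\partial_\mu U(x,\mu,\tilde x))^\top]\in\mathbb R^{d\times d}$. *)

theory Defs
  imports "HOL-Probability.Probability"
begin

definition P2 :: "'a::euclidean_space measure set" where
  "P2 = {\<mu>. prob_space \<mu> \<and> sets \<mu> = sets (borel :: 'a measure) \<and>
             integrable \<mu> (\<lambda>x. (norm x)\<^sup>2)}"

definition couplings :: "'a::euclidean_space measure \<Rightarrow> 'a measure \<Rightarrow> ('a \<times> 'a) measure set" where
  "couplings \<mu> \<nu> = {\<pi>. prob_space \<pi> \<and> sets \<pi> = sets (borel :: ('a \<times> 'a) measure) \<and>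
                       distr \<pi> borel fst = \<mu> \<and> distr \<pi> borel snd = \<nu>}"

definition W2 :: "'a::euclidean_space measure \<Rightarrow> 'a measure \<Rightarrow> real" where
  "W2 \<mu> \<nu> = sqrt (enn2real (INF \<pi>\<in>couplings \<mu> \<nu>.
                      \<integral>\<^sup>+ p. ennreal ((norm (fst p - snd p))\<^sup>2) \<partial>\<pi>))"

definition atomless :: "'w measure \<Rightarrow> bool" where
  "atomless M \<longleftrightarrow> (\<forall>A\<in>sets M. 0 < measure M A \<longrightarrow>
      (\<exists>B\<in>sets M. B \<subseteq> A \<and> 0 < measure M B \<and> measure M B < measure M A))"

definition L2 :: "'w measure \<Rightarrow> ('w \<Rightarrow> 'a::euclidean_space) set" where
  "L2 M = {\<xi>. \<xi> \<in> borel_measurable M \<and> integrable M (\<lambda>\<omega>. (norm (\<xi> \<omega>))\<^sup>2)}"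

definition L2norm :: "'w measure \<Rightarrow> ('w \<Rightarrow> 'a::euclidean_space) \<Rightarrow> real" where
  "L2norm M \<eta> = sqrt (\<integral>\<omega>. (norm (\<eta> \<omega>))\<^sup>2 \<partial>M)"

definition law :: "'w measure \<Rightarrow> ('w \<Rightarrow> 'a::euclidean_space) \<Rightarrow> 'a measure" where
  "law M \<xi> = distr M borel \<xi>"

definition has_W_derivative ::
  "'w measure \<Rightarrow> ('a::euclidean_space measure \<Rightarrow> 'b::euclidean_space)
     \<Rightarrow> ('a measure \<Rightarrow> 'a \<Rightarrow> ('a \<Rightarrow>\<^sub>L 'b)) \<Rightarrow> bool" where
  "has_W_derivative M \<Phi> D \<longleftrightarrow>
     (\<forall>\<mu>\<in>P2. integrable \<mu> (\<lambda>y. (norm (D \<mu> y))\<^sup>2)) \<and>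
     (\<forall>\<xi>\<in>L2 M. \<forall>e>0. \<exists>d>0. \<forall>\<eta>\<in>L2 M. L2norm M \<eta> < d \<longrightarrow>
        norm (\<Phi> (law M (\<lambda>\<omega>. \<xi> \<omega> + \<eta> \<omega>)) - \<Phi> (law M \<xi>)
              - (\<integral>\<omega>. blinfun_apply (D (law M \<xi>) (\<xi> \<omega>)) (\<eta> \<omega>) \<partial>M))
          \<le> e * L2norm M \<eta>)"

definition cont_xP2 :: "('a::euclidean_space \<Rightarrow> 'a measure \<Rightarrow> 'b::metric_space) \<Rightarrow> bool" where
  "cont_xP2 F \<longleftrightarrow> (\<forall>x. \<forall>\<mu>\<in>P2. \<forall>e>0. \<exists>d>0. \<forall>y. \<forall>\<nu>\<in>P2.
      dist y x < d \<and> W2 \<nu> \<mu> < d \<longrightarrow> dist (F y \<nu>) (F x \<mu>) < e)"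

definition cont_xP2x :: "('a::euclidean_space \<Rightarrow> 'a measure \<Rightarrow> 'a \<Rightarrow> 'b::metric_space) \<Rightarrow> bool" where
  "cont_xP2x F \<longleftrightarrow> (\<forall>x. \<forall>\<mu>\<in>P2. \<forall>z. \<forall>e>0. \<exists>d>0. \<forall>y. \<forall>\<nu>\<in>P2. \<forall>w.
      dist y x < d \<and> W2 \<nu> \<mu> < d \<and> dist w z < d \<longrightarrow> dist (F y \<nu> w) (F x \<mu> z) < e)"

end

(*
  As the underlying space is atomless, it carries random variables \<xi>
  whose laws converge to \<mu> in W_2 and which equal x on events A of positive but vanishing
  probability: quantize \<mu>, realize the quantized law on the space, and reserve a small event for
  an atom at x. Testing displacement monotonicity with \<eta> = 1_A v gives
    P(A)^2 <d_x d_mu U(x, L_\<xi>, x) v, v> + P(A) <d_xx U(x, L_\<xi>) v, v> >= 0;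
  dividing by P(A) and letting P(A) -> 0, L_\<xi> -> \<mu>, continuity of the two second derivatives
  yields <d_xx U(x, \<mu>) v, v> >= 0. No other regularity of U is needed.
*)
theory Submission
  imports Defs
begin

section \<open>Atomless measures\<close>

lemma (in finite_measure) atomless_small_subset:
  assumes atomless: "atomless M" and A: "A \<in> sets M" "0 < measure M A" and e: "0 < e"
  shows "\<exists>B\<in>sets M. B \<subseteq> A \<and> 0 < measure M B \<and> measure M B < e"
proof -
  have halving: "\<exists>B\<in>sets M. B \<subseteq> A \<and> 0 < measure M B \<and> measure M B \<le> measure M A / 2^n" for n
  proof (induction n)
    case 0
    then show ?case using A by auto
  next
    case (Suc n)
    then obtain B where B: "B \<in> sets M" "B \<subseteq> A" "0 < measure M B" "measure M B \<le> measure M A / 2^n"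
      by blast
    then obtain C where C: "C \<in> sets M" "C \<subseteq> B" "0 < measure M C" "measure M C < measure M B"
      using atomless unfolding atomless_def by blast
    have BC: "B - C \<in> sets M" "measure M (B - C) = measure M B - measure M C"
      using B C by (auto simp: finite_measure_Diff)
    have half: "m \<le> measure M A / 2 ^ Suc n" if "m \<le> measure M B / 2" for m
    proof -
      have "m * 2 ^ Suc n \<le> measure M B * 2 ^ n"
        using that by (simp add: field_simps mult_right_mono)
      also have "\<dots> \<le> measure M A" using B(4) by (simp add: field_simps)
      finally show ?thesis by (simp add: field_simps)
    qed
    consider "measure M C \<le> measure M B / 2" | "measure M (B - C) \<le> measure M B / 2"
      using BC by linarith
    then show ?case
    proof cases
      case 1
      then show ?thesis using B C by (intro bexI[of _ C]) (auto intro: half)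
    next
      case 2
      then show ?thesis using B C BC by (intro bexI[of _ "B - C"]) (auto intro: half)
    qed
  qed
  obtain n where "measure M A / e < 2^n"
    using real_arch_pow[of 2 "measure M A / e"] by auto
  then have "measure M A / 2^n < e" using e by (simp add: field_simps)
  with halving[of n] show ?thesis by (meson le_less_trans)
qed

lemma (in finite_measure) exists_subset_near_sup:
  assumes "0 \<le> r"
  shows "\<exists>C\<in>sets M. C \<subseteq> S \<and> measure M C \<le> r \<and>
    (\<forall>C'\<in>sets M. C' \<subseteq> S \<and> measure M C' \<le> r \<longrightarrow> measure M C' \<le> 2 * measure M C)"
proof -
  define V where "V = measure M ` {C\<in>sets M. C \<subseteq> S \<and> measure M C \<le> r}"
  have V_ne: "{} \<in> {C\<in>sets M. C \<subseteq> S \<and> measure M C \<le> r}" using assms by simp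
  have V_bdd: "bdd_above V" unfolding V_def bdd_above_def by blast
  have le_Sup: "measure M C' \<le> Sup V" if "C' \<in> sets M" "C' \<subseteq> S" "measure M C' \<le> r" for C'
    using that V_bdd unfolding V_def by (intro cSup_upper) auto
  show ?thesis
  proof (cases "Sup V \<le> 0")
    case True
    then show ?thesis using assms le_Sup by (intro bexI[of _ "{}"]) fastforce+
  next
    case False
    then have "Sup V / 2 < Sup V" by simp
    then obtain y where "y \<in> V" "Sup V / 2 < y"
      using V_ne V_bdd unfolding V_def by (subst (asm) less_cSup_iff) auto
    then obtain C where "C \<in> sets M" "C \<subseteq> S" "measure M C \<le> r" "Sup V / 2 < measure M C"
      unfolding V_def by blast
    then show ?thesis using le_Sup by (intro bexI[of _ C]) fastforce+
  qed
qed

lemma (in finite_measure) greedy_exhaustion: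
  assumes t: "0 \<le> t"
  obtains Ds where "\<And>n. Ds n \<in> sets M" "\<And>n. Ds n \<subseteq> A" "\<And>n. measure M (Ds n) \<le> t" "incseq Ds"
    "\<And>C n. C \<in> sets M \<Longrightarrow> C \<subseteq> A - Ds n \<Longrightarrow> measure M C \<le> t - measure M (Ds n) \<Longrightarrow>
       measure M C \<le> 2 * (measure M (Ds (Suc n)) - measure M (Ds n))"
proof -
  define admissible where
    "admissible D C \<longleftrightarrow> C \<in> sets M \<and> C \<subseteq> A - D \<and> measure M C \<le> t - measure M D" for D C
  have "\<exists>C. measure M D \<le> t \<longrightarrow> admissible D C \<and>
          (\<forall>C'. admissible D C' \<longrightarrow> measure M C' \<le> 2 * measure M C)" for D
    using exists_subset_near_sup[of "t - measure M D" "A - D"] unfolding admissible_def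
    by (cases "measure M D \<le> t") auto
  then obtain step where step:
    "\<And>D. measure M D \<le> t \<Longrightarrow> admissible D (step D)"
    "\<And>D C'. measure M D \<le> t \<Longrightarrow> admissible D C' \<Longrightarrow> measure M C' \<le> 2 * measure M (step D)"
    by metis
  define Ds where "Ds n = rec_nat {} (\<lambda>_ D. D \<union> step D) n" for n
  have Ds_Suc: "Ds (Suc n) = Ds n \<union> step (Ds n)" for n
    unfolding Ds_def by simp
  have Ds_grow: "measure M (Ds (Suc n)) = measure M (Ds n) + measure M (step (Ds n))"
    if "Ds n \<in> sets M" "measure M (Ds n) \<le> t" for n
  proof -
    have "Ds n \<inter> step (Ds n) = {}" "step (Ds n) \<in> sets M"
      using step(1)[OF that(2)] unfolding admissible_def by auto
    then show ?thesis unfolding Ds_Suc using that(1) by (simp add: measure_Union)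
  qed
  have Ds: "Ds n \<in> sets M \<and> Ds n \<subseteq> A \<and> measure M (Ds n) \<le> t" for n
  proof (induction n)
    case 0
    then show ?case using t by (simp add: Ds_def)
  next
    case (Suc n)
    then show ?case using step(1)[of "Ds n"] Ds_grow[of n] unfolding Ds_Suc admissible_def by auto
  qed
  show ?thesis
  proof
    show "incseq Ds" by (rule incseq_SucI) (simp add: Ds_Suc)
    show "measure M C \<le> 2 * (measure M (Ds (Suc n)) - measure M (Ds n))"
      if "C \<in> sets M" "C \<subseteq> A - Ds n" "measure M C \<le> t - measure M (Ds n)" for C n
      using that step(2)[of "Ds n" C] Ds[of n] Ds_grow[of n] unfolding admissible_def by simp
  qed (use Ds in blast)+
qed

text \<open>Sierpinski's theorem. The greedy exhaustion must reach t: otherwise a small set of positive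
  measure remains available at every step, and the increments could not be summable.\<close>

lemma (in finite_measure) atomless_subset_with_measure:
  assumes atomless: "atomless M" and A: "A \<in> sets M" and t: "0 \<le> t" "t \<le> measure M A"
  shows "\<exists>B\<in>sets M. B \<subseteq> A \<and> measure M B = t"
proof -
  obtain Ds where Ds: "\<And>n. Ds n \<in> sets M" "\<And>n. Ds n \<subseteq> A" "\<And>n. measure M (Ds n) \<le> t" "incseq Ds"
    and greedy: "\<And>C n. C \<in> sets M \<Longrightarrow> C \<subseteq> A - Ds n \<Longrightarrow> measure M C \<le> t - measure M (Ds n) \<Longrightarrow>
       measure M C \<le> 2 * (measure M (Ds (Suc n)) - measure M (Ds n))"
    using greedy_exhaustion[OF t(1)] by metis
  define D where "D = (\<Union>n. Ds n)"
  have D: "D \<in> sets M" "D \<subseteq> A" using Ds unfolding D_def by blast+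
  have Ds_le_D: "measure M (Ds n) \<le> measure M D" for n
    using D Ds unfolding D_def by (intro finite_measure_mono) blast+
  have "(\<lambda>n. measure M (Ds n)) \<longlonglongrightarrow> measure M D"
    unfolding D_def using Ds by (intro finite_Lim_measure_incseq) auto
  then have D_le: "measure M D \<le> t"
    using Ds by (intro LIMSEQ_le_const2) auto
  have "measure M D = t"
  proof (rule ccontr)
    assume "measure M D \<noteq> t"
    then have "0 < measure M (A - D)" "0 < t - measure M D"
      using D D_le A t by (simp_all add: finite_measure_Diff)
    then obtain C where C: "C \<in> sets M" "C \<subseteq> A - D" "0 < measure M C" "measure M C < t - measure M D"
      using atomless_small_subset[OF atomless, of "A - D"] A D by blast
    have increment: "measure M C \<le> 2 * (measure M (Ds (Suc n)) - measure M (Ds n))" for n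
      using C Ds_le_D[of n] unfolding D_def by (intro greedy) auto
    have linear_growth: "real n * (measure M C / 2) \<le> measure M (Ds n)" for n
    proof (induction n)
      case (Suc n)
      then show ?case using increment[of n] by (simp add: algebra_simps)
    qed simp
    obtain n where "t / (measure M C / 2) < real n"
      using reals_Archimedean2 by blast
    then have "t < real n * (measure M C / 2)"
      using C(3) by (simp add: divide_less_eq)
    also have "\<dots> \<le> t"
      using linear_growth[of n] Ds(3)[of n] by linarith
    finally show False by simp
  qed
  then show ?thesis using D by blast
qed

lemma (in finite_measure) atomless_disjoint_subsets_with_measures:
  assumes atomless: "atomless M" and Q: "finite Q"
    and A: "A \<in> sets M" and w: "\<And>c. c \<in> Q \<Longrightarrow> 0 \<le> w c" and total: "sum w Q \<le> measure M A"
  shows "\<exists>B. (\<forall>c\<in>Q. B c \<in> sets M \<and> B c \<subseteq> A \<and> measure M (B c) = w c) \<and> disjoint_family_on B Q"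
  using Q A w total
proof (induction Q arbitrary: A rule: finite_induct)
  case empty
  then show ?case by (auto simp: disjoint_family_on_def)
next
  case (insert c Q)
  have "0 \<le> sum w Q" using insert.prems by (intro sum_nonneg) simp
  then have "w c \<le> measure M A" using insert by simp
  moreover have "0 \<le> w c" using insert.prems(2) by simp
  ultimately obtain C where C: "C \<in> sets M" "C \<subseteq> A" "measure M C = w c"
    using atomless_subset_with_measure[OF atomless insert.prems(1)] by blast
  have "sum w Q \<le> measure M (A - C)"
    using C insert by (simp add: finite_measure_Diff)
  then obtain B where B: "\<forall>d\<in>Q. B d \<in> sets M \<and> B d \<subseteq> A - C \<and> measure M (B d) = w d"
      "disjoint_family_on B Q"
    using insert.IH[of "A - C"] insert.prems(2) C(1) insert.prems(1) by auto
  have "disjoint_family_on (B(c := C)) (insert c Q)"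
    using B insert.hyps(2) unfolding disjoint_family_on_def by (auto simp: fun_upd_def)
  moreover have "\<forall>d\<in>insert c Q. (B(c := C)) d \<in> sets M \<and> (B(c := C)) d \<subseteq> A \<and> measure M ((B(c := C)) d) = w d"
    using B C by (auto simp: fun_upd_def)
  ultimately show ?case by blast
qed

lemma (in prob_space) atomless_partition_proportional:
  fixes q :: "'c \<Rightarrow> 'b::t1_space"
  assumes atomless: "atomless M" and \<mu>: "prob_space \<mu>"
    and q: "q \<in> borel_measurable \<mu>" "finite (range q)" and \<epsilon>: "0 \<le> \<epsilon>" "\<epsilon> \<le> 1"
  obtains A B where "A \<in> sets M" "measure M A = \<epsilon>"
    "\<And>c. c \<in> range q \<Longrightarrow> B c \<in> sets M" "disjoint_family_on B (range q)"
    "(\<Union>c\<in>range q. B c) = space M - A"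
    "\<And>c. c \<in> range q \<Longrightarrow> measure M (B c) = measure \<mu> (q -` {c} \<inter> space \<mu>) * (1 - \<epsilon>)"
proof -
  interpret \<mu>: prob_space \<mu> by fact
  define w where "w c = measure \<mu> (q -` {c} \<inter> space \<mu>) * (1 - \<epsilon>)" for c
  have pre: "q -` {c} \<inter> space \<mu> \<in> sets \<mu>" for c
    using q(1) by (rule measurable_sets) (simp add: borel_closed)
  have "(\<Sum>c\<in>range q. measure \<mu> (q -` {c} \<inter> space \<mu>)) = measure \<mu> (\<Union>c\<in>range q. q -` {c} \<inter> space \<mu>)"
    using q(2) pre by (intro \<mu>.finite_measure_finite_Union[symmetric]) (auto simp: disjoint_family_on_def)
  also have "(\<Union>c\<in>range q. q -` {c} \<inter> space \<mu>) = space \<mu>"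
    by blast
  finally have w_sum: "sum w (range q) = 1 - \<epsilon>"
    unfolding w_def by (simp add: \<mu>.prob_space sum_distrib_right[symmetric])
  then obtain B where B: "\<forall>c\<in>range q. B c \<in> sets M \<and> B c \<subseteq> space M \<and> measure M (B c) = w c"
      and B_disj: "disjoint_family_on B (range q)"
    using atomless_disjoint_subsets_with_measures[OF atomless q(2), of "space M" w] \<epsilon>
    unfolding w_def by (auto simp: prob_space)
  have UB: "(\<Union>c\<in>range q. B c) \<in> sets M"
    using B q(2) by blast
  have "measure M (\<Union>c\<in>range q. B c) = (\<Sum>c\<in>range q. measure M (B c))"
    using B B_disj q(2) by (intro finite_measure_finite_Union) auto
  also have "\<dots> = 1 - \<epsilon>"
    using B w_sum by (metis (no_types, lifting) sum.cong)
  finally have "measure M (space M - (\<Union>c\<in>range q. B c)) = \<epsilon>"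
    using prob_compl[OF UB] by simp
  then show ?thesis
    using that[of "space M - (\<Union>c\<in>range q. B c)" B] UB B B_disj unfolding w_def by blast
qed

section \<open>Realizing a mixture on an atomless space\<close>

lemma emeasure_distr_piecewise_const:
  assumes J: "finite J" and E: "E ` J \<subseteq> sets M" "disjoint_family_on E J" "(\<Union>j\<in>J. E j) = space M"
    and f: "f \<in> borel_measurable M" "\<And>j \<omega>. j \<in> J \<Longrightarrow> \<omega> \<in> E j \<Longrightarrow> f \<omega> = \<phi> j"
    and S: "S \<in> sets borel"
  shows "emeasure (distr M borel f) S = (\<Sum>j\<in>{j\<in>J. \<phi> j \<in> S}. emeasure M (E j))"
proof -
  have "f -` S \<inter> space M = (\<Union>j\<in>{j\<in>J. \<phi> j \<in> S}. E j)"
  proof (intro equalityI subsetI)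
    fix \<omega> assume "\<omega> \<in> f -` S \<inter> space M"
    then obtain j where "j \<in> J" "\<omega> \<in> E j" "f \<omega> \<in> S" using E(3) by blast
    then show "\<omega> \<in> (\<Union>j\<in>{j\<in>J. \<phi> j \<in> S}. E j)" using f(2) by force
  qed (use E(3) f(2) in blast)
  then have "emeasure (distr M borel f) S = emeasure M (\<Union>j\<in>{j\<in>J. \<phi> j \<in> S}. E j)"
    using f(1) S by (simp add: emeasure_distr)
  also have "\<dots> = (\<Sum>j\<in>{j\<in>J. \<phi> j \<in> S}. emeasure M (E j))"
    using E J by (intro sum_emeasure[symmetric]) (auto intro: disjoint_family_on_mono)
  finally show ?thesis .
qed

lemma distr_eq_if_piecewise_const:
  assumes J: "finite J"
    and E: "E ` J \<subseteq> sets M" "disjoint_family_on E J" "(\<Union>j\<in>J. E j) = space M"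
    and f: "f \<in> borel_measurable M" "\<And>j \<omega>. j \<in> J \<Longrightarrow> \<omega> \<in> E j \<Longrightarrow> f \<omega> = \<phi> j"
    and F: "F ` J \<subseteq> sets N" "disjoint_family_on F J" "(\<Union>j\<in>J. F j) = space N"
    and g: "g \<in> borel_measurable N" "\<And>j \<omega>. j \<in> J \<Longrightarrow> \<omega> \<in> F j \<Longrightarrow> g \<omega> = \<phi> j"
    and EF: "\<And>j. j \<in> J \<Longrightarrow> emeasure M (E j) = emeasure N (F j)"
  shows "distr M borel f = distr N borel g"
proof (rule measure_eqI)
  fix S assume "S \<in> sets (distr M borel f)"
  then have S: "S \<in> sets borel" by simp
  have "emeasure (distr M borel f) S = (\<Sum>j\<in>{j\<in>J. \<phi> j \<in> S}. emeasure M (E j))"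
    by (rule emeasure_distr_piecewise_const[OF J E f S])
  also have "\<dots> = (\<Sum>j\<in>{j\<in>J. \<phi> j \<in> S}. emeasure N (F j))"
    using EF by (intro sum.cong) auto
  also have "\<dots> = emeasure (distr N borel g) S"
    by (rule emeasure_distr_piecewise_const[OF J F g S, symmetric])
  finally show "emeasure (distr M borel f) S = emeasure (distr N borel g) S" .
qed simp

lemma sum_indicator_disjoint_family:
  fixes B :: "'a::real_vector \<Rightarrow> 'w set"
  assumes "finite Q" "c \<in> Q" "\<omega> \<in> B c" "disjoint_family_on B Q"
  shows "(\<Sum>d\<in>Q. indicator (B d) \<omega> *\<^sub>R d) = c"
proof -
  have "indicator (B d) \<omega> *\<^sub>R d = (if d = c then c else 0)" if "d \<in> Q" for d
    using assms(2-4) that unfolding disjoint_family_on_def by (auto simp: indicator_def)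
  then show ?thesis using assms(1,2) by (simp add: sum.delta cong: sum.cong)
qed

text \<open>The right-hand side is the mixture of the point mass at x, with weight measure M A, and
  of the image of \<mu> under q.\<close>

lemma distr_eq_mixture:
  fixes \<xi> :: "'w \<Rightarrow> 'b::t1_space" and q :: "'a \<Rightarrow> 'b"
  assumes M: "prob_space M" and \<mu>: "prob_space \<mu>"
    and q: "q \<in> borel_measurable \<mu>" "finite Q" "q ` space \<mu> \<subseteq> Q"
    and A: "A \<in> sets M" "\<And>\<omega>. \<omega> \<in> A \<Longrightarrow> \<xi> \<omega> = x"
    and B: "\<And>c. c \<in> Q \<Longrightarrow> B c \<in> sets M" "disjoint_family_on B Q" "(\<Union>c\<in>Q. B c) = space M - A"
      "\<And>c \<omega>. c \<in> Q \<Longrightarrow> \<omega> \<in> B c \<Longrightarrow> \<xi> \<omega> = c"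
    and B_measure: "\<And>c. c \<in> Q \<Longrightarrow> measure M (B c) = measure \<mu> (q -` {c} \<inter> space \<mu>) * (1 - measure M A)"
    and \<xi>: "\<xi> \<in> borel_measurable M"
  shows "distr M borel \<xi> = distr (\<mu> \<Otimes>\<^sub>M M) borel (\<lambda>p. if snd p \<in> A then x else q (fst p))"
proof -
  interpret M: prob_space M by fact
  interpret \<mu>: prob_space \<mu> by fact
  define J where "J = insert None (Some ` Q)"
  define E where "E j = (case j of None \<Rightarrow> A | Some c \<Rightarrow> B c)" for j
  define F where "F j = (case j of None \<Rightarrow> space \<mu> \<times> A
                                  | Some c \<Rightarrow> (q -` {c} \<inter> space \<mu>) \<times> (space M - A))" for j
  define \<phi> where "\<phi> j = (case j of None \<Rightarrow> x | Some c \<Rightarrow> c)" for j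
  have pre: "q -` {c} \<inter> space \<mu> \<in> sets \<mu>" for c
    using q(1) by (rule measurable_sets) (simp add: borel_closed)
  have BA: "B c \<inter> A = {}" if "c \<in> Q" for c
    using B(3) that by blast
  show ?thesis
  proof (rule distr_eq_if_piecewise_const[where J=J and E=E and F=F and \<phi>=\<phi>])
    show "finite J" unfolding J_def using q(2) by simp
    show "E ` J \<subseteq> sets M" "(\<Union>j\<in>J. E j) = space M"
      unfolding J_def E_def using A B(1,3) sets.sets_into_space[OF A(1)] by auto
    show "disjoint_family_on E J"
      using B(2) BA unfolding disjoint_family_on_def J_def E_def by (auto split: option.splits)
    show "\<xi> \<omega> = \<phi> j" if "j \<in> J" "\<omega> \<in> E j" for j \<omega>
      using that A(2) B(4) unfolding J_def E_def \<phi>_def by auto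
    show "F ` J \<subseteq> sets (\<mu> \<Otimes>\<^sub>M M)"
      unfolding J_def F_def using A pre by (auto intro!: pair_measureI)
    show "disjoint_family_on F J"
      unfolding disjoint_family_on_def J_def F_def by (auto split: option.splits)
    show "(\<Union>j\<in>J. F j) = space (\<mu> \<Otimes>\<^sub>M M)"
      unfolding J_def F_def space_pair_measure using q(3) sets.sets_into_space[OF A(1)] by auto
    show "(if snd p \<in> A then x else q (fst p)) = \<phi> j" if "j \<in> J" "p \<in> F j" for j p
      using that unfolding J_def F_def \<phi>_def by auto
    show "emeasure M (E j) = emeasure (\<mu> \<Otimes>\<^sub>M M) (F j)" if "j \<in> J" for j
    proof (cases j)
      case None
      then show ?thesis
        unfolding E_def F_def using M.emeasure_pair_measure_Times[OF sets.top A(1), of \<mu>]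
        by (simp add: \<mu>.emeasure_space_1)
    next
      case (Some c)
      have "c \<in> Q" using that Some by (auto simp: J_def)
      have "emeasure (\<mu> \<Otimes>\<^sub>M M) (F j)
          = emeasure \<mu> (q -` {c} \<inter> space \<mu>) * emeasure M (space M - A)"
        unfolding F_def Some option.case using A pre by (intro M.emeasure_pair_measure_Times) auto
      also have "\<dots> = emeasure M (B c)"
        using B_measure[OF \<open>c \<in> Q\<close>] M.prob_compl[OF A(1)] M.prob_le_1[of A]
        by (simp add: M.emeasure_eq_measure \<mu>.emeasure_eq_measure ennreal_mult[symmetric])
      finally show ?thesis unfolding E_def Some by simp
    qed
  qed (use \<xi> A(1) q(1) in simp_all)
qed

lemma atomless_realize_mixture:
  fixes M :: "'w measure" and q :: "'a \<Rightarrow> 'b::euclidean_space"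
  assumes M: "prob_space M" "atomless M" and \<mu>: "prob_space \<mu>"
    and q: "q \<in> borel_measurable \<mu>" "finite (range q)" and \<epsilon>: "0 \<le> \<epsilon>" "\<epsilon> \<le> 1"
  shows "\<exists>\<xi> A. \<xi> \<in> borel_measurable M \<and> finite (range \<xi>) \<and> A \<in> sets M \<and> measure M A = \<epsilon> \<and>
    (\<forall>\<omega>\<in>A. \<xi> \<omega> = x) \<and>
    distr M borel \<xi> = distr (\<mu> \<Otimes>\<^sub>M M) borel (\<lambda>p. if snd p \<in> A then x else q (fst p))"
proof -
  interpret M: prob_space M by fact
  obtain A B where A: "A \<in> sets M" "measure M A = \<epsilon>"
    and B: "\<And>c. c \<in> range q \<Longrightarrow> B c \<in> sets M" "disjoint_family_on B (range q)"
      "(\<Union>c\<in>range q. B c) = space M - A"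
      "\<And>c. c \<in> range q \<Longrightarrow> measure M (B c) = measure \<mu> (q -` {c} \<inter> space \<mu>) * (1 - \<epsilon>)"
    using M.atomless_partition_proportional[OF M(2) \<mu> q \<epsilon>] by metis
  define \<xi> where "\<xi> \<omega> = (if \<omega> \<in> A then x else (\<Sum>c\<in>range q. indicator (B c) \<omega> *\<^sub>R c))" for \<omega>
  have \<xi>_A: "\<forall>\<omega>\<in>A. \<xi> \<omega> = x"
    unfolding \<xi>_def by simp
  have \<xi>_B: "\<xi> \<omega> = c" if "c \<in> range q" "\<omega> \<in> B c" for c \<omega>
    using that sum_indicator_disjoint_family[OF q(2) that B(2)] B(3) unfolding \<xi>_def by auto
  have "range \<xi> \<subseteq> insert x (insert 0 (range q))"
  proof safe
    fix \<omega> assume "\<xi> \<omega> \<noteq> x" "\<xi> \<omega> \<notin> range q"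
    then have "\<omega> \<notin> B c" if "c \<in> range q" for c
      using \<xi>_B that by metis
    then show "\<xi> \<omega> = 0" using \<open>\<xi> \<omega> \<noteq> x\<close> unfolding \<xi>_def by auto
  qed
  then have \<xi>_finite: "finite (range \<xi>)"
    using q(2) by (meson finite_insert finite_subset)
  have \<xi>_meas: "\<xi> \<in> borel_measurable M"
  proof -
    have "(\<lambda>\<omega>. \<Sum>c\<in>range q. indicator (B c) \<omega> *\<^sub>R c) \<in> borel_measurable M"
      using B(1) by (intro borel_measurable_sum borel_measurable_scaleR borel_measurable_indicator) auto
    then show ?thesis unfolding \<xi>_def using A(1) by (intro measurable_If_set) auto
  qed
  have "distr M borel \<xi> = distr (\<mu> \<Otimes>\<^sub>M M) borel (\<lambda>p. if snd p \<in> A then x else q (fst p))"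
    using M(1) \<mu> q(1,2) A(1) \<xi>_A B(1,2,3) \<xi>_B B(4) \<xi>_meas
    by (intro distr_eq_mixture[where Q="range q" and B=B]) (auto simp: A(2))
  then show ?thesis
    using A \<xi>_A \<xi>_meas \<xi>_finite by blast
qed

section \<open>Quantization\<close>

definition quantize :: "nat \<Rightarrow> 'a::euclidean_space \<Rightarrow> 'a" where
  "quantize n y = (if norm y \<le> real n
     then (\<Sum>b\<in>Basis. (of_int \<lfloor>(y \<bullet> b) * real (Suc n)\<rfloor> / real (Suc n)) *\<^sub>R b) else 0)"

lemma quantize_measurable [measurable]: "quantize n \<in> borel_measurable borel"
  unfolding quantize_def by measurable

lemma finite_range_quantize: "finite (range (quantize n :: 'a::euclidean_space \<Rightarrow> 'a))"
proof -
  define K where "K = int (n * Suc n)"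
  define G where "G k = (\<Sum>b\<in>Basis. (of_int (k b) / real (Suc n)) *\<^sub>R b)" for k :: "'a \<Rightarrow> int"
  have "quantize n y \<in> insert 0 (G ` (Basis \<rightarrow>\<^sub>E {-K..K}))" if y: "norm y \<le> real n" for y :: 'a
  proof -
    define k where "k = restrict (\<lambda>b. \<lfloor>(y \<bullet> b) * real (Suc n)\<rfloor>) Basis"
    have "k b \<in> {-K..K}" if b: "b \<in> Basis" for b
    proof -
      have "\<bar>y \<bullet> b\<bar> \<le> real n"
        using Basis_le_norm[OF b, of y] y by linarith
      then have "\<bar>y \<bullet> b\<bar> * real (Suc n) \<le> real n * real (Suc n)"
        by (rule mult_right_mono) simp
      moreover have "real_of_int K = real n * real (Suc n)"
        unfolding K_def by (simp add: algebra_simps)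
      ultimately have "\<bar>(y \<bullet> b) * real (Suc n)\<bar> \<le> real_of_int K"
        by (simp only: abs_mult abs_of_nat)
      then have "- real_of_int K \<le> (y \<bullet> b) * real (Suc n)" "(y \<bullet> b) * real (Suc n) \<le> real_of_int K"
        by arith+
      then show ?thesis
        unfolding k_def using b by (simp add: le_floor_iff floor_le_iff)
    qed
    then have "k \<in> Basis \<rightarrow>\<^sub>E {-K..K}" unfolding k_def by auto
    moreover have "quantize n y = G k" unfolding quantize_def G_def k_def using y by simp
    ultimately show ?thesis by blast
  qed
  then have "range (quantize n :: 'a \<Rightarrow> 'a) \<subseteq> insert 0 (G ` (Basis \<rightarrow>\<^sub>E {-K..K}))"
    by (auto simp: quantize_def[of n])
  then show ?thesis by (rule finite_subset) (simp add: finite_PiE)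
qed

lemma norm_quantize_diff_le:
  fixes y :: "'a::euclidean_space"
  assumes "norm y \<le> real n"
  shows "norm (quantize n y - y) \<le> real DIM('a) / real (Suc n)"
proof -
  define c where "c b = of_int \<lfloor>(y \<bullet> b) * real (Suc n)\<rfloor> / real (Suc n) - y \<bullet> b" for b :: 'a
  have c: "\<bar>c b\<bar> \<le> 1 / real (Suc n)" for b
  proof -
    have "c b * real (Suc n) = of_int \<lfloor>(y \<bullet> b) * real (Suc n)\<rfloor> - (y \<bullet> b) * real (Suc n)"
      unfolding c_def by (simp add: field_simps)
    then have "\<bar>c b * real (Suc n)\<bar> \<le> 1"
      using of_int_floor_le[of "(y \<bullet> b) * real (Suc n)"] real_of_int_floor_add_one_gt[of "(y \<bullet> b) * real (Suc n)"]
      by linarith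
    then show ?thesis by (simp add: abs_mult field_simps)
  qed
  have "quantize n y - y = (\<Sum>b\<in>Basis. c b *\<^sub>R b)"
    unfolding quantize_def c_def using assms
    by (simp add: scaleR_diff_left sum_subtractf euclidean_representation)
  also have "norm \<dots> \<le> (\<Sum>b\<in>(Basis::'a set). 1 / real (Suc n))"
    using c by (intro norm_sum[THEN order_trans] sum_mono) simp
  finally show ?thesis by simp
qed

lemma quantize_tendsto: "(\<lambda>n. quantize n y) \<longlonglongrightarrow> (y::'a::euclidean_space)"
proof -
  obtain N :: nat where N: "norm y \<le> real N" using real_arch_simple by blast
  have "eventually (\<lambda>n. norm (norm (quantize n y - y)) \<le> real DIM('a) * inverse (real (Suc n))) sequentially"
    using N norm_quantize_diff_le[of y]
    by (intro eventually_sequentiallyI[of N]) (simp add: divide_inverse order_trans)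
  moreover have "(\<lambda>n. real DIM('a) * inverse (real (Suc n))) \<longlonglongrightarrow> 0"
    by (intro tendsto_mult_right_zero LIMSEQ_inverse_real_of_nat)
  ultimately have "(\<lambda>n. norm (quantize n y - y)) \<longlonglongrightarrow> 0" by (rule Lim_null_comparison)
  then show ?thesis by (simp add: LIM_zero_cancel tendsto_norm_zero_iff)
qed

lemma
  fixes \<mu> :: "'a::euclidean_space measure"
  assumes \<mu>: "\<mu> \<in> P2"
  shows integrable_quantize_error: "integrable \<mu> (\<lambda>y. (norm (quantize n y - y))\<^sup>2)"
    and quantize_L2_error_tendsto: "(\<lambda>n. \<integral>y. (norm (quantize n y - y))\<^sup>2 \<partial>\<mu>) \<longlonglongrightarrow> 0"
proof -
  interpret prob_space \<mu> using \<mu> unfolding P2_def by simp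
  have sets_\<mu>: "sets \<mu> = sets borel" and sq: "integrable \<mu> (\<lambda>y. (norm y)\<^sup>2)"
    using \<mu> unfolding P2_def by auto
  define s where "s n y = (norm (quantize n y - y))\<^sup>2" for n and y :: 'a
  have s_meas: "s n \<in> borel_measurable \<mu>" for n
    unfolding s_def measurable_cong_sets[OF sets_\<mu> refl] by measurable
  have dominating: "integrable \<mu> (\<lambda>y. real DIM('a) ^ 2 + (norm y)\<^sup>2)"
    using sq by simp
  have s_le: "norm (s n y) \<le> real DIM('a) ^ 2 + (norm y)\<^sup>2" for n y
  proof (cases "norm y \<le> real n")
    case True
    have "real DIM('a) / real (Suc n) \<le> real DIM('a)"
      by (simp add: divide_le_eq)
    then have "norm (quantize n y - y) \<le> real DIM('a)"
      using norm_quantize_diff_le[OF True] by linarith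
    then show ?thesis unfolding s_def by (simp add: power_mono add_increasing2)
  qed (simp add: s_def quantize_def)
  have s_lim: "(\<lambda>n. s n y) \<longlonglongrightarrow> 0" for y
    unfolding s_def using quantize_tendsto[of y] by (auto intro!: tendsto_eq_intros)
  have "integrable \<mu> (s n)"
    by (rule Bochner_Integration.integrable_bound[OF dominating s_meas]) (use s_le in auto)
  then show "integrable \<mu> (\<lambda>y. (norm (quantize n y - y))\<^sup>2)"
    unfolding s_def .
  show "(\<lambda>n. \<integral>y. (norm (quantize n y - y))\<^sup>2 \<partial>\<mu>) \<longlonglongrightarrow> 0"
    using integral_dominated_convergence[where f="\<lambda>_. 0", OF _ s_meas dominating] s_lim s_le
    unfolding s_def by auto
qed

section \<open>Approximation in W2 by variables with a prescribed value\<close>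

lemma (in finite_measure) L2_if_finite_range:
  assumes "\<xi> \<in> borel_measurable M" "finite (range \<xi>)"
  shows "\<xi> \<in> L2 M"
proof -
  obtain C where "\<And>\<omega>. norm (\<xi> \<omega>) \<le> C"
    using finite_imp_bounded[OF assms(2)] unfolding bounded_iff by blast
  then have "integrable M (\<lambda>\<omega>. (norm (\<xi> \<omega>))\<^sup>2)"
    using assms(1) by (intro integrable_const_bound[where B="C\<^sup>2"]) (auto intro!: AE_I2 power_mono)
  then show ?thesis unfolding L2_def using assms(1) by simp
qed

lemma (in prob_space) law_in_P2:
  assumes "\<xi> \<in> L2 M"
  shows "law M \<xi> \<in> P2"
  using assms unfolding P2_def L2_def law_def
  by (auto intro: prob_space_distr simp: integrable_distr_eq)

lemma W2_nonneg: "0 \<le> W2 \<mu> \<nu>"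
  unfolding W2_def by simp

lemma norm_diff_squared_le: "(norm (x - y))\<^sup>2 \<le> 2 * (norm x)\<^sup>2 + 2 * (norm (y::'a::real_normed_vector))\<^sup>2"
proof -
  have "(norm (x - y))\<^sup>2 \<le> (norm x + norm y)\<^sup>2"
    by (rule power_mono) (simp_all add: norm_triangle_ineq4)
  moreover have "0 \<le> (norm x - norm y)\<^sup>2" by simp
  ultimately show ?thesis unfolding power2_sum power2_diff by linarith
qed

lemma P2_integrable_norm_diff_squared:
  assumes \<mu>: "\<mu> \<in> P2"
  shows "integrable \<mu> (\<lambda>y. (norm (x - y))\<^sup>2)"
proof (rule Bochner_Integration.integrable_bound)
  have sets_\<mu>: "sets \<mu> = sets borel" and "integrable \<mu> (\<lambda>y. (norm y)\<^sup>2)"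
    and "finite_measure \<mu>"
    using \<mu> unfolding P2_def by (auto simp: prob_space_def)
  then show "integrable \<mu> (\<lambda>y. 2 * (norm x)\<^sup>2 + 2 * (norm y)\<^sup>2)"
    by (simp add: finite_measure.integrable_const)
  show "(\<lambda>y. (norm (x - y))\<^sup>2) \<in> borel_measurable \<mu>"
    unfolding measurable_cong_sets[OF sets_\<mu> refl] by measurable
  show "AE y in \<mu>. norm ((norm (x - y))\<^sup>2) \<le> norm (2 * (norm x)\<^sup>2 + 2 * (norm y)\<^sup>2)"
    using norm_diff_squared_le[of x] by simp
qed

lemma W2_le_joint_cost:
  assumes N: "prob_space N" and X: "X \<in> borel_measurable N" and Y: "Y \<in> borel_measurable N"
    and cost: "(\<integral>\<^sup>+\<omega>. ennreal ((norm (X \<omega> - Y \<omega>))\<^sup>2) \<partial>N) \<le> ennreal r" and r: "0 \<le> r"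
  shows "W2 (distr N borel X) (distr N borel Y) \<le> sqrt r"
proof -
  define \<pi> where "\<pi> = distr N borel (\<lambda>\<omega>. (X \<omega>, Y \<omega>))"
  have XY: "(\<lambda>\<omega>. (X \<omega>, Y \<omega>)) \<in> borel_measurable N"
    using X Y by measurable
  have "distr \<pi> borel fst = distr N borel X" "distr \<pi> borel snd = distr N borel Y"
    unfolding \<pi>_def using XY
    by (subst distr_distr; simp add: comp_def flip: borel_prod)+
  then have "\<pi> \<in> couplings (distr N borel X) (distr N borel Y)"
    unfolding couplings_def \<pi>_def using XY by (auto intro!: prob_space.prob_space_distr[OF N])
  moreover have "(\<integral>\<^sup>+p. ennreal ((norm (fst p - snd p))\<^sup>2) \<partial>\<pi>) \<le> ennreal r"
    unfolding \<pi>_def using XY cost by (subst nn_integral_distr) (auto simp flip: borel_prod)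
  ultimately have "(INF \<pi>\<in>couplings (distr N borel X) (distr N borel Y).
      \<integral>\<^sup>+p. ennreal ((norm (fst p - snd p))\<^sup>2) \<partial>\<pi>) \<le> ennreal r"
    by (meson INF_lower order_trans)
  then have "enn2real (INF \<pi>\<in>couplings (distr N borel X) (distr N borel Y).
      \<integral>\<^sup>+p. ennreal ((norm (fst p - snd p))\<^sup>2) \<partial>\<pi>) \<le> enn2real (ennreal r)"
    by (rule enn2real_mono) simp
  then show ?thesis
    unfolding W2_def using r by (simp add: real_sqrt_le_mono)
qed

lemma mixture_transport_cost:
  fixes q :: "'a::euclidean_space \<Rightarrow> 'a"
  assumes M: "prob_space M" and A: "A \<in> sets M" and sets_\<mu>: "sets \<mu> = sets borel"
    and q: "q \<in> borel_measurable borel"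
    and int_x: "integrable \<mu> (\<lambda>y. (norm (x - y))\<^sup>2)" and int_q: "integrable \<mu> (\<lambda>y. (norm (q y - y))\<^sup>2)"
  shows "(\<integral>\<^sup>+p. ennreal ((norm ((if snd p \<in> A then x else q (fst p)) - fst p))\<^sup>2) \<partial>(\<mu> \<Otimes>\<^sub>M M))
    \<le> ennreal (measure M A * (\<integral>y. (norm (x - y))\<^sup>2 \<partial>\<mu>) + (\<integral>y. (norm (q y - y))\<^sup>2 \<partial>\<mu>))"
proof -
  interpret M: prob_space M by fact
  define a where "a = (\<lambda>y. (norm (x - y))\<^sup>2)"
  define b where "b = (\<lambda>y. (norm (q y - y))\<^sup>2)"
  define cost where "cost p = ennreal ((norm ((if snd p \<in> A then x else q (fst p)) - fst p))\<^sup>2)" for p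
  have "cost \<in> borel_measurable (\<mu> \<Otimes>\<^sub>M M)"
    unfolding cost_def using A q sets_\<mu> by measurable
  then have "(\<integral>\<^sup>+p. cost p \<partial>(\<mu> \<Otimes>\<^sub>M M)) = (\<integral>\<^sup>+y. \<integral>\<^sup>+\<omega>. cost (y, \<omega>) \<partial>M \<partial>\<mu>)"
    by (rule M.nn_integral_fst[symmetric])
  also have "\<dots> \<le> (\<integral>\<^sup>+y. ennreal (measure M A * a y + b y) \<partial>\<mu>)"
  proof (rule nn_integral_mono)
    fix y
    have "(\<integral>\<^sup>+\<omega>. cost (y, \<omega>) \<partial>M) \<le> (\<integral>\<^sup>+\<omega>. ennreal (indicator A \<omega> * a y + b y) \<partial>M)"
      unfolding cost_def a_def b_def by (intro nn_integral_mono ennreal_leI) (auto simp: indicator_def)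
    also have "\<dots> = ennreal (\<integral>\<omega>. indicator A \<omega> * a y + b y \<partial>M)"
      using A by (intro nn_integral_eq_integral) (auto simp: a_def b_def M.emeasure_eq_measure)
    also have "(\<integral>\<omega>. indicator A \<omega> * a y + b y \<partial>M) = measure M A * a y + b y"
      using A by (simp add: M.emeasure_eq_measure M.prob_space)
    finally show "(\<integral>\<^sup>+\<omega>. cost (y, \<omega>) \<partial>M) \<le> ennreal (measure M A * a y + b y)" .
  qed
  also have "\<dots> = ennreal (measure M A * (\<integral>y. a y \<partial>\<mu>) + (\<integral>y. b y \<partial>\<mu>))"
    using int_x int_q by (subst nn_integral_eq_integral) (auto simp: a_def b_def)
  finally show ?thesis unfolding cost_def a_def b_def .
qed

text \<open>The coupling behind this estimate keeps the first coordinate y of the product space: it moves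
  y to x on A and to q y off A.\<close>

lemma W2_mixture_le:
  fixes q :: "'a::euclidean_space \<Rightarrow> 'a"
  assumes M: "prob_space M" and \<mu>: "\<mu> \<in> P2" and A: "A \<in> sets M"
    and q: "q \<in> borel_measurable borel" "integrable \<mu> (\<lambda>y. (norm (q y - y))\<^sup>2)"
  shows "W2 (distr (\<mu> \<Otimes>\<^sub>M M) borel (\<lambda>p. if snd p \<in> A then x else q (fst p))) \<mu>
    \<le> sqrt (measure M A * (\<integral>y. (norm (x - y))\<^sup>2 \<partial>\<mu>) + (\<integral>y. (norm (q y - y))\<^sup>2 \<partial>\<mu>))"
proof -
  interpret M: prob_space M by fact
  interpret \<mu>: prob_space \<mu> using \<mu> unfolding P2_def by simp
  have sets_\<mu>: "sets \<mu> = sets borel"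
    using \<mu> unfolding P2_def by simp
  have "distr (\<mu> \<Otimes>\<^sub>M M) borel fst = distr (\<mu> \<Otimes>\<^sub>M M) \<mu> fst"
    using sets_\<mu> by (intro distr_cong) simp_all
  then have fst_marginal: "distr (\<mu> \<Otimes>\<^sub>M M) borel fst = \<mu>"
    using M.distr_pair_fst by simp
  have "W2 (distr (\<mu> \<Otimes>\<^sub>M M) borel (\<lambda>p. if snd p \<in> A then x else q (fst p))) (distr (\<mu> \<Otimes>\<^sub>M M) borel fst)
    \<le> sqrt (measure M A * (\<integral>y. (norm (x - y))\<^sup>2 \<partial>\<mu>) + (\<integral>y. (norm (q y - y))\<^sup>2 \<partial>\<mu>))"
  proof (rule W2_le_joint_cost[OF prob_space_pair[OF \<mu>.prob_space_axioms M]])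
    show "(\<lambda>p. if snd p \<in> A then x else q (fst p)) \<in> borel_measurable (\<mu> \<Otimes>\<^sub>M M)"
      "fst \<in> borel_measurable (\<mu> \<Otimes>\<^sub>M M)"
      using A q(1) sets_\<mu> by measurable
    show "(\<integral>\<^sup>+p. ennreal ((norm ((if snd p \<in> A then x else q (fst p)) - fst p))\<^sup>2) \<partial>(\<mu> \<Otimes>\<^sub>M M))
      \<le> ennreal (measure M A * (\<integral>y. (norm (x - y))\<^sup>2 \<partial>\<mu>) + (\<integral>y. (norm (q y - y))\<^sup>2 \<partial>\<mu>))"
      by (rule mixture_transport_cost[OF M A sets_\<mu> q(1) P2_integrable_norm_diff_squared[OF \<mu>] q(2)])
  qed simp
  then show ?thesis unfolding fst_marginal .
qed

lemma atomless_approx_law_with_value: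
  fixes M :: "'w measure" and \<mu> :: "'a::euclidean_space measure"
  assumes M: "prob_space M" "atomless M" and \<mu>: "\<mu> \<in> P2" and d: "0 < d" and e: "0 < e"
  shows "\<exists>\<xi> A. \<xi> \<in> L2 M \<and> W2 (law M \<xi>) \<mu> < d \<and>
    A \<in> sets M \<and> 0 < measure M A \<and> measure M A < e \<and> (\<forall>\<omega>\<in>A. \<xi> \<omega> = x)"
proof -
  interpret M: prob_space M by fact
  interpret \<mu>: prob_space \<mu> using \<mu> unfolding P2_def by simp
  have q: "quantize n \<in> borel_measurable \<mu>" for n
    using \<mu> measurable_cong_sets[of \<mu> borel borel borel] unfolding P2_def by auto
  define K where "K = (\<integral>y. (norm (x - y))\<^sup>2 \<partial>\<mu>)"
  have "0 \<le> K" unfolding K_def by simp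
  have "0 < d\<^sup>2 / 2" using d by simp
  with quantize_L2_error_tendsto[OF \<mu>]
  have "eventually (\<lambda>n. (\<integral>y. (norm (quantize n y - y))\<^sup>2 \<partial>\<mu>) < d\<^sup>2 / 2) sequentially"
    by (rule order_tendstoD(2))
  then obtain n where quant: "(\<integral>y. (norm (quantize n y - y))\<^sup>2 \<partial>\<mu>) < d\<^sup>2 / 2"
    by (auto simp: eventually_sequentially)
  define \<epsilon> where "\<epsilon> = min (e / 2) (min 1 (d\<^sup>2 / (2 * (K + 1))))"
  have \<epsilon>: "0 < \<epsilon>" "\<epsilon> \<le> 1" "\<epsilon> < e"
    unfolding \<epsilon>_def using e d \<open>0 \<le> K\<close> by auto
  have "\<epsilon> * K \<le> d\<^sup>2 / (2 * (K + 1)) * K"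
    unfolding \<epsilon>_def using \<open>0 \<le> K\<close> by (intro mult_right_mono) auto
  also have "\<dots> \<le> d\<^sup>2 / 2"
    using \<open>0 \<le> K\<close> by (simp add: field_simps)
  finally have cost: "\<epsilon> * K + (\<integral>y. (norm (quantize n y - y))\<^sup>2 \<partial>\<mu>) < d\<^sup>2"
    using quant by linarith
  obtain \<xi> A where \<xi>: "\<xi> \<in> borel_measurable M" "finite (range \<xi>)"
      and A: "A \<in> sets M" "measure M A = \<epsilon>" "\<forall>\<omega>\<in>A. \<xi> \<omega> = x"
      and law: "distr M borel \<xi> = distr (\<mu> \<Otimes>\<^sub>M M) borel (\<lambda>p. if snd p \<in> A then x else quantize n (fst p))"
    using atomless_realize_mixture[OF M \<mu>.prob_space_axioms q finite_range_quantize
        \<epsilon>(1)[THEN less_imp_le] \<epsilon>(2), where x=x]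
    by blast
  have "W2 (law M \<xi>) \<mu> \<le> sqrt (\<epsilon> * K + (\<integral>y. (norm (quantize n y - y))\<^sup>2 \<partial>\<mu>))"
    using W2_mixture_le[OF M(1) \<mu> A(1) quantize_measurable integrable_quantize_error[OF \<mu>]]
    unfolding law_def law A(2) K_def .
  also have "\<dots> < sqrt (d\<^sup>2)"
    using cost by (rule real_sqrt_less_mono)
  also have "\<dots> = d" using d by simp
  finally show ?thesis
    using M.L2_if_finite_range[OF \<xi>] A \<epsilon> by (intro exI[of _ \<xi>] exI[of _ A]) auto
qed

lemma atomless_approx_law_with_value_seq:
  fixes M :: "'w measure" and \<mu> :: "'a::euclidean_space measure"
  assumes M: "prob_space M" "atomless M" and \<mu>: "\<mu> \<in> P2"
  shows "\<exists>\<xi> A. (\<forall>n. \<xi> n \<in> L2 M \<and> A n \<in> sets M \<and> 0 < measure M (A n) \<and> (\<forall>\<omega>\<in>A n. \<xi> n \<omega> = x)) \<and>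
    (\<lambda>n. W2 (law M (\<xi> n)) \<mu>) \<longlonglongrightarrow> 0 \<and> (\<lambda>n. measure M (A n)) \<longlonglongrightarrow> 0"
proof -
  have "\<forall>n. \<exists>\<xi> A. \<xi> \<in> L2 M \<and> W2 (law M \<xi>) \<mu> < 1 / Suc n \<and>
      A \<in> sets M \<and> 0 < measure M A \<and> measure M A < 1 / Suc n \<and> (\<forall>\<omega>\<in>A. \<xi> \<omega> = x)"
    using atomless_approx_law_with_value[OF M \<mu>] by simp
  then obtain \<xi> A where \<xi>A: "\<And>n. \<xi> n \<in> L2 M \<and> W2 (law M (\<xi> n)) \<mu> < 1 / Suc n \<and>
      A n \<in> sets M \<and> 0 < measure M (A n) \<and> measure M (A n) < 1 / Suc n \<and> (\<forall>\<omega>\<in>A n. \<xi> n \<omega> = x)"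
    by metis
  have "(\<lambda>n. W2 (law M (\<xi> n)) \<mu>) \<longlonglongrightarrow> 0" "(\<lambda>n. measure M (A n)) \<longlonglongrightarrow> 0"
    using \<xi>A by (auto intro!: tendsto_sandwich[OF _ _ tendsto_const LIMSEQ_Suc[OF lim_inverse_n']]
        always_eventually simp: less_imp_le W2_nonneg)
  then show ?thesis using \<xi>A by blast
qed

section \<open>Displacement monotonicity tested on indicator directions\<close>

lemma cont_xP2_tendsto:
  assumes "cont_xP2 F" "\<mu> \<in> P2" "\<And>n. \<nu> n \<in> P2" "(\<lambda>n. W2 (\<nu> n) \<mu>) \<longlonglongrightarrow> 0"
  shows "(\<lambda>n. F x (\<nu> n)) \<longlonglongrightarrow> F x \<mu>"
proof (rule tendstoI)
  fix e :: real assume "0 < e"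
  then obtain d where "0 < d" "\<And>\<nu>. \<nu> \<in> P2 \<Longrightarrow> W2 \<nu> \<mu> < d \<Longrightarrow> dist (F x \<nu>) (F x \<mu>) < e"
    using assms(1,2) unfolding cont_xP2_def by (metis dist_self)
  then show "eventually (\<lambda>n. dist (F x (\<nu> n)) (F x \<mu>) < e) sequentially"
    using order_tendstoD(2)[OF assms(4) \<open>0 < d\<close>] assms(3) by (auto elim: eventually_mono)
qed

lemma cont_xP2x_tendsto:
  assumes "cont_xP2x F" "\<mu> \<in> P2" "\<And>n. \<nu> n \<in> P2" "(\<lambda>n. W2 (\<nu> n) \<mu>) \<longlonglongrightarrow> 0"
  shows "(\<lambda>n. F x (\<nu> n) z) \<longlonglongrightarrow> F x \<mu> z"
proof (rule tendstoI)
  fix e :: real assume "0 < e"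
  then obtain d where "0 < d" "\<And>\<nu>. \<nu> \<in> P2 \<Longrightarrow> W2 \<nu> \<mu> < d \<Longrightarrow> dist (F x \<nu> z) (F x \<mu> z) < e"
    using assms(1,2) unfolding cont_xP2x_def by (metis dist_self)
  then show "eventually (\<lambda>n. dist (F x (\<nu> n) z) (F x \<mu> z) < e) sequentially"
    using order_tendstoD(2)[OF assms(4) \<open>0 < d\<close>] assms(3) by (auto elim: eventually_mono)
qed

lemma integral_pair_indicator_quadratic_form:
  fixes \<xi> :: "'w \<Rightarrow> 'a::euclidean_space" and S :: "'a \<Rightarrow> 'a \<Rightarrow> ('a \<Rightarrow>\<^sub>L 'a)" and T :: "'a \<Rightarrow> ('a \<Rightarrow>\<^sub>L 'a)" and v :: 'a
  assumes M: "prob_space M" and A: "A \<in> sets M" "\<forall>\<omega>\<in>A. \<xi> \<omega> = x"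
  defines "\<eta> \<equiv> \<lambda>\<omega>. indicator A \<omega> *\<^sub>R v"
  shows "(\<integral>p. S (\<xi> (fst p)) (\<xi> (snd p)) (\<eta> (snd p)) \<bullet> \<eta> (fst p) + T (\<xi> (fst p)) (\<eta> (fst p)) \<bullet> \<eta> (fst p)
            \<partial>(M \<Otimes>\<^sub>M M))
      = (measure M A)\<^sup>2 * (S x x v \<bullet> v) + measure M A * (T x v \<bullet> v)"
proof -
  interpret M: prob_space M by fact
  interpret MM: pair_prob_space M M by unfold_locales
  have AA: "A \<times> A \<in> sets (M \<Otimes>\<^sub>M M)" and AM: "A \<times> space M \<in> sets (M \<Otimes>\<^sub>M M)"
    using A by auto
  have "(\<integral>p. S (\<xi> (fst p)) (\<xi> (snd p)) (\<eta> (snd p)) \<bullet> \<eta> (fst p) + T (\<xi> (fst p)) (\<eta> (fst p)) \<bullet> \<eta> (fst p)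
            \<partial>(M \<Otimes>\<^sub>M M))
      = (\<integral>p. (S x x v \<bullet> v) * indicator (A \<times> A) p + (T x v \<bullet> v) * indicator (A \<times> space M) p \<partial>(M \<Otimes>\<^sub>M M))"
    using A(2) by (intro Bochner_Integration.integral_cong)
      (auto simp: \<eta>_def indicator_def space_pair_measure)
  also have "\<dots> = (S x x v \<bullet> v) * measure (M \<Otimes>\<^sub>M M) (A \<times> A) + (T x v \<bullet> v) * measure (M \<Otimes>\<^sub>M M) (A \<times> space M)"
    using AA AM by (simp add: MM.P.emeasure_eq_measure)
  also have "measure (M \<Otimes>\<^sub>M M) (A \<times> A) = (measure M A)\<^sup>2"
    using A(1) by (simp add: measure_def M.emeasure_pair_measure_Times enn2real_mult power2_eq_square)
  also have "measure (M \<Otimes>\<^sub>M M) (A \<times> space M) = measure M A"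
    using A(1) by (simp add: measure_def M.emeasure_pair_measure_Times enn2real_mult M.emeasure_space_1)
  finally show ?thesis by (simp add: mult.commute)
qed

lemma quadratic_form_nonneg_of_indicator_direction:
  fixes \<xi> :: "'w \<Rightarrow> 'a::euclidean_space" and S :: "'a \<Rightarrow> 'a \<Rightarrow> ('a \<Rightarrow>\<^sub>L 'a)" and T :: "'a \<Rightarrow> ('a \<Rightarrow>\<^sub>L 'a)"
  assumes M: "prob_space M" and A: "A \<in> sets M" "0 < measure M A" "\<forall>\<omega>\<in>A. \<xi> \<omega> = x"
    and nonneg: "\<And>\<eta>. \<eta> \<in> L2 M \<Longrightarrow>
      0 \<le> (\<integral>p. S (\<xi> (fst p)) (\<xi> (snd p)) (\<eta> (snd p)) \<bullet> \<eta> (fst p) + T (\<xi> (fst p)) (\<eta> (fst p)) \<bullet> \<eta> (fst p)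
             \<partial>(M \<Otimes>\<^sub>M M))"
  shows "0 \<le> measure M A * (S x x v \<bullet> v) + T x v \<bullet> v"
proof -
  interpret M: prob_space M by fact
  have "range (\<lambda>\<omega>. indicator A \<omega> *\<^sub>R v) \<subseteq> {0, v}"
    by (auto simp: indicator_def)
  then have "(\<lambda>\<omega>. indicator A \<omega> *\<^sub>R v) \<in> L2 M"
    using A(1) by (intro M.L2_if_finite_range) (auto intro: finite_subset)
  from nonneg[OF this] have "0 \<le> (measure M A)\<^sup>2 * (S x x v \<bullet> v) + measure M A * (T x v \<bullet> v)"
    unfolding integral_pair_indicator_quadratic_form[OF M A(1,3)] .
  then have "0 \<le> measure M A * (measure M A * (S x x v \<bullet> v) + T x v \<bullet> v)"
    by (simp add: power2_eq_square algebra_simps)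
  then show ?thesis using A(2) by (simp add: zero_le_mult_iff)
qed

theorem mainTheorem2:
  fixes M :: "'w measure"
    and U :: "'a::euclidean_space \<Rightarrow> 'a measure \<Rightarrow> real"
    and DxU :: "'a \<Rightarrow> 'a measure \<Rightarrow> 'a"
    and DxxU :: "'a \<Rightarrow> 'a measure \<Rightarrow> ('a \<Rightarrow>\<^sub>L 'a)"
    and DxmuU :: "'a \<Rightarrow> 'a measure \<Rightarrow> 'a \<Rightarrow> ('a \<Rightarrow>\<^sub>L 'a)"
  assumes prob: "prob_space M"
    and atomless: "atomless M"
    and gradx: "\<And>x \<mu>. \<mu> \<in> P2 \<Longrightarrow>
                 ((\<lambda>y. U y \<mu>) has_derivative (\<lambda>h. DxU x \<mu> \<bullet> h)) (at x)"
    and DxU_cont: "cont_xP2 DxU"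
    and hessx: "\<And>x \<mu>. \<mu> \<in> P2 \<Longrightarrow>
                 ((\<lambda>y. DxU y \<mu>) has_derivative blinfun_apply (DxxU x \<mu>)) (at x)"
    and DxxU_cont: "cont_xP2 DxxU"
    and dmu: "\<And>x. has_W_derivative M (\<lambda>\<mu>. DxU x \<mu>) (\<lambda>\<mu> z. DxmuU x \<mu> z)"
    and DxmuU_cont: "cont_xP2x DxmuU"
    and monotone: "\<And>\<xi> \<eta>. \<xi> \<in> L2 M \<Longrightarrow> \<eta> \<in> L2 M \<Longrightarrow>
        0 \<le> (\<integral>p. blinfun_apply (DxmuU (\<xi> (fst p)) (law M \<xi>) (\<xi> (snd p))) (\<eta> (snd p)) \<bullet> \<eta> (fst p)
                 + blinfun_apply (DxxU (\<xi> (fst p)) (law M \<xi>)) (\<eta> (fst p)) \<bullet> \<eta> (fst p)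
             \<partial>(M \<Otimes>\<^sub>M M))"
  shows "\<forall>x. \<forall>\<mu>\<in>P2. \<forall>v. 0 \<le> blinfun_apply (DxxU x \<mu>) v \<bullet> v"
proof (intro allI ballI)
  fix x :: 'a and \<mu> :: "'a measure" and v :: 'a
  assume \<mu>: "\<mu> \<in> P2"
  interpret M: prob_space M by fact
  obtain \<xi> A where \<xi>A: "\<And>n. \<xi> n \<in> L2 M \<and> A n \<in> sets M \<and> 0 < measure M (A n) \<and> (\<forall>\<omega>\<in>A n. \<xi> n \<omega> = x)"
    and W2_lim: "(\<lambda>n. W2 (law M (\<xi> n)) \<mu>) \<longlonglongrightarrow> 0" and A_lim: "(\<lambda>n. measure M (A n)) \<longlonglongrightarrow> 0"
    using atomless_approx_law_with_value_seq[OF prob atomless \<mu>] by blast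
  define \<nu> where "\<nu> n = law M (\<xi> n)" for n
  have \<nu>: "\<nu> n \<in> P2" for n
    unfolding \<nu>_def using \<xi>A M.law_in_P2 by blast
  have "0 \<le> measure M (A n) * (DxmuU x (\<nu> n) x v \<bullet> v) + DxxU x (\<nu> n) v \<bullet> v" for n
    unfolding \<nu>_def using \<xi>A[of n]
    by (intro quadratic_form_nonneg_of_indicator_direction[OF prob, where \<xi>="\<xi> n"
          and S="\<lambda>y z. DxmuU y (law M (\<xi> n)) z" and T="\<lambda>y. DxxU y (law M (\<xi> n))"])
      (auto intro: monotone)
  moreover have "(\<lambda>n. measure M (A n) * (DxmuU x (\<nu> n) x v \<bullet> v) + DxxU x (\<nu> n) v \<bullet> v)
      \<longlonglongrightarrow> 0 * (DxmuU x \<mu> x v \<bullet> v) + DxxU x \<mu> v \<bullet> v"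
  proof (intro tendsto_intros)
    show "(\<lambda>n. DxmuU x (\<nu> n) x) \<longlonglongrightarrow> DxmuU x \<mu> x"
      using W2_lim unfolding \<nu>_def by (rule cont_xP2x_tendsto[OF DxmuU_cont \<mu> \<nu>[unfolded \<nu>_def]])
    show "(\<lambda>n. DxxU x (\<nu> n)) \<longlonglongrightarrow> DxxU x \<mu>"
      using W2_lim unfolding \<nu>_def by (rule cont_xP2_tendsto[OF DxxU_cont \<mu> \<nu>[unfolded \<nu>_def]])
  qed (fact A_lim)
  ultimately show "0 \<le> DxxU x \<mu> v \<bullet> v"
    by (simp add: LIMSEQ_le_const)
qed

end
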